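(* Let $G=(V,E)$ be a finite graph (parallel edges and loops allowed), $e\neq f$ edges, and let $\lambda=(\lambda_g)_{g\in E\setminus\{e,f\}}$ with $\lambda_g\in\{0,1,2\}$. Say that equality holds for $(G,\lambda)$ if the coefficient of $\mathbf{x}^\lambda=\prod_g x_g^{\lambda_g}$ in $\mathcal{M}_{ef}(1)$ equals its coefficient in $R_G:=\sum_{\beta,\gamma}\mathbf{x}^{\beta}\mathbf{x}^{\gamma}\sum_{\mathbf{m}\in B_{\beta,\gamma}}\mathbf{m}$. Let $g\in E\setminus\{e,f\}$. (i) If $\lambda_g=0$ and equality holds for $G\setminus g$ (deletion) with the exponent vector $\lambda$ restricted to the remaining edges, then equality holds for $(G,\lambda)$. (ii) If $\lambda_g=2$ and equality holds for $G/g$ (contraction) with the exponent vector obtained from $\lambda$ by setting $\lambda_g=0$ (i.e. dropping $g$), then equality holds for $(G,\lambda)$.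
   Context: Let $\{x_h : h\in E\}$ be variables. For $F\subseteq E$, $\mathbf{x}^F=\prod_{h\in F}x_h$ and $k(F)$ is the number of connected components of $(V,F)$. For $A,B\subseteq E$, $\mathcal{T}_A^B=\sum_{F\subseteq E:\,A\subseteq F,\,F\cap B=\varnothing}\mathbf{x}^F q^{k(F)}$; $\mathcal{T}_e^f=\mathcal{T}_{\{e\}}^{\{f\}}$, $\mathcal{T}_f^e=\mathcal{T}_{\{f\}}^{\{e\}}$, $\mathcal{T}_{ef}=\mathcal{T}_{\{e,f\}}^{\varnothing}$, $\mathcal{T}^{ef}=\mathcal{T}_{\varnothing}^{\{e,f\}}$, $\mathcal{M}_{ef}(q)=(\mathcal{T}_e^f\mathcal{T}_f^e-\mathcal{T}_{ef}\mathcal{T}^{ef})/(x_ex_f(1-q))$ (a polynomial), evaluated at $q=1$. Let $E^{ef}=E\setminus\{e,f\}$. $F\subseteq E^{ef}$ is a paracel if $k(F+e)=k(F+f)=k(F)-1$ and $(V,F+e)$, $(V,F+f)$ have the same connected components; an edge of $E^{ef}\setminus F$ is a smoot for paracel $F$ if it joins the same two components of $(V,F)$ as $e$ and $f$. For disjoint $\beta,\gamma\subseteq E^{ef}$, $A_{\beta,\gamma}$ is the set of $\alpha\subseteq E^{ef}$ disjoint from $\beta,\gamma$ with $\gamma\cup\alpha$ a paracel and every edge of $\beta$ a smoot for $\gamma\cup\alpha$; $\alpha,\alpha'\in A_{\beta,\gamma}$ are twins if $\alpha\cap\alpha'\in A_{\beta,\gamma}$; $B_{\beta,\gamma}$ is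 the set of distinct monomials $\mathbf{x}^{\alpha}\mathbf{x}^{\alpha'}$ with $\alpha,\alpha'$ twins. The sum in $R_G$ is over ordered pairs of disjoint subsets $\beta,\gamma$ of $E^{ef}$. All these objects are defined the same way for $G\setminus g$ and $G/g$ (which keep the edges $e,f$). *)

theory Defs
  imports Main "HOL-Library.Poly_Mapping" "HOL-Computational_Algebra.Polynomial"
begin

text \<open>A finite multigraph (parallel edges and loops allowed) is given by a vertex set V,
  a set E of edge names and an endpoint map ends :: edge => vertex * vertex.\<close>

definition wf_graph :: "'v set \<Rightarrow> 'e set \<Rightarrow> ('e \<Rightarrow> 'v \<times> 'v) \<Rightarrow> bool" where
  "wf_graph V E ends \<longleftrightarrow> finite V \<and> finite E \<and>
     (\<forall>h\<in>E. fst (ends h) \<in> V \<and> snd (ends h) \<in> V)"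

definition adj :: "('e \<Rightarrow> 'v \<times> 'v) \<Rightarrow> 'e set \<Rightarrow> ('v \<times> 'v) set" where
  "adj ends F = {(a, b). \<exists>h\<in>F. ends h = (a, b) \<or> ends h = (b, a)}"

definition comps :: "'v set \<Rightarrow> ('e \<Rightarrow> 'v \<times> 'v) \<Rightarrow> 'e set \<Rightarrow> 'v set set" where
  "comps V ends F = V // ((adj ends F)\<^sup>*)"

definition ncomp :: "'v set \<Rightarrow> ('e \<Rightarrow> 'v \<times> 'v) \<Rightarrow> 'e set \<Rightarrow> nat" where
  "ncomp V ends F = card (comps V ends F)"

definition comp_of :: "('e \<Rightarrow> 'v \<times> 'v) \<Rightarrow> 'e set \<Rightarrow> 'v \<Rightarrow> 'v set" where
  "comp_of ends F u = ((adj ends F)\<^sup>*) `` {u}"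

definition expo :: "'e set \<Rightarrow> 'e \<Rightarrow>\<^sub>0 nat" where
  "expo F = (\<Sum>h\<in>F. Poly_Mapping.single h 1)"

text \<open>Polynomials in the variables x_h (h an edge) with coefficients in Z[q]:
  the type ('e =>0 nat) =>0 int poly. T_A^B:\<close>
definition Tpoly :: "'v set \<Rightarrow> 'e set \<Rightarrow> ('e \<Rightarrow> 'v \<times> 'v) \<Rightarrow> 'e set \<Rightarrow> 'e set
    \<Rightarrow> ('e \<Rightarrow>\<^sub>0 nat) \<Rightarrow>\<^sub>0 int poly" where
  "Tpoly V E ends A B =
     (\<Sum>F\<in>{F. F \<subseteq> E \<and> A \<subseteq> F \<and> F \<inter> B = {}}.
        Poly_Mapping.single (expo F) (monom 1 (ncomp V ends F)))"

definition Mnum :: "'v set \<Rightarrow> 'e set \<Rightarrow> ('e \<Rightarrow> 'v \<times> 'v) \<Rightarrow> 'e \<Rightarrow> 'e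
    \<Rightarrow> ('e \<Rightarrow>\<^sub>0 nat) \<Rightarrow>\<^sub>0 int poly" where
  "Mnum V E ends e f =
     Tpoly V E ends {e} {f} * Tpoly V E ends {f} {e}
     - Tpoly V E ends {e, f} {} * Tpoly V E ends {} {e, f}"

text \<open>Coefficient of x^lam in M_ef(1) = (numerator/(x_e x_f (1-q)))|_{q=1}:
  the coefficient of x^lam x_e x_f in the numerator is a polynomial in q, which
  (as asserted in the paper) is divisible by 1-q; divide and evaluate at q = 1.\<close>
definition coeff_M1 :: "'v set \<Rightarrow> 'e set \<Rightarrow> ('e \<Rightarrow> 'v \<times> 'v) \<Rightarrow> 'e \<Rightarrow> 'e
    \<Rightarrow> ('e \<Rightarrow>\<^sub>0 nat) \<Rightarrow> int" where
  "coeff_M1 V E ends e f lam =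
     poly (Poly_Mapping.lookup (Mnum V E ends e f)
             (lam + Poly_Mapping.single e 1 + Poly_Mapping.single f 1) div [:1, -1:]) 1"

definition Eef :: "'e set \<Rightarrow> 'e \<Rightarrow> 'e \<Rightarrow> 'e set" where
  "Eef E e f = E - {e, f}"

definition paracel :: "'v set \<Rightarrow> 'e set \<Rightarrow> ('e \<Rightarrow> 'v \<times> 'v) \<Rightarrow> 'e \<Rightarrow> 'e \<Rightarrow> 'e set \<Rightarrow> bool" where
  "paracel V E ends e f F \<longleftrightarrow> F \<subseteq> Eef E e f \<and>
     int (ncomp V ends (insert e F)) = int (ncomp V ends F) - 1 \<and>
     int (ncomp V ends (insert f F)) = int (ncomp V ends F) - 1 \<and>
     comps V ends (insert e F) = comps V ends (insert f F)"

definition smoot :: "'v set \<Rightarrow> 'e set \<Rightarrow> ('e \<Rightarrow> 'v \<times> 'v) \<Rightarrow> 'e \<Rightarrow> 'e \<Rightarrow> 'e set \<Rightarrow> 'e \<Rightarrow> bool" where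
  "smoot V E ends e f F h \<longleftrightarrow> h \<in> Eef E e f - F \<and>
     {comp_of ends F (fst (ends h)), comp_of ends F (snd (ends h))}
       = {comp_of ends F (fst (ends e)), comp_of ends F (snd (ends e))} \<and>
     {comp_of ends F (fst (ends h)), comp_of ends F (snd (ends h))}
       = {comp_of ends F (fst (ends f)), comp_of ends F (snd (ends f))}"

definition Aset :: "'v set \<Rightarrow> 'e set \<Rightarrow> ('e \<Rightarrow> 'v \<times> 'v) \<Rightarrow> 'e \<Rightarrow> 'e \<Rightarrow> 'e set \<Rightarrow> 'e set
    \<Rightarrow> 'e set set" where
  "Aset V E ends e f \<beta> \<gamma> = {\<alpha>. \<alpha> \<subseteq> Eef E e f \<and> \<alpha> \<inter> \<beta> = {} \<and> \<alpha> \<inter> \<gamma> = {} \<and>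
       paracel V E ends e f (\<gamma> \<union> \<alpha>) \<and> (\<forall>h\<in>\<beta>. smoot V E ends e f (\<gamma> \<union> \<alpha>) h)}"

text \<open>B_{beta,gamma}: the set of distinct monomials x^alpha x^alpha' (as exponent vectors)
  with alpha, alpha' twins.\<close>
definition Bset :: "'v set \<Rightarrow> 'e set \<Rightarrow> ('e \<Rightarrow> 'v \<times> 'v) \<Rightarrow> 'e \<Rightarrow> 'e \<Rightarrow> 'e set \<Rightarrow> 'e set
    \<Rightarrow> ('e \<Rightarrow>\<^sub>0 nat) set" where
  "Bset V E ends e f \<beta> \<gamma> = {expo \<alpha> + expo \<alpha>' | \<alpha> \<alpha>'.
       \<alpha> \<in> Aset V E ends e f \<beta> \<gamma> \<and> \<alpha>' \<in> Aset V E ends e f \<beta> \<gamma> \<and>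
       \<alpha> \<inter> \<alpha>' \<in> Aset V E ends e f \<beta> \<gamma>}"

definition Rpoly :: "'v set \<Rightarrow> 'e set \<Rightarrow> ('e \<Rightarrow> 'v \<times> 'v) \<Rightarrow> 'e \<Rightarrow> 'e
    \<Rightarrow> ('e \<Rightarrow>\<^sub>0 nat) \<Rightarrow>\<^sub>0 int" where
  "Rpoly V E ends e f =
     (\<Sum>(\<beta>, \<gamma>)\<in>{(\<beta>, \<gamma>). \<beta> \<subseteq> Eef E e f \<and> \<gamma> \<subseteq> Eef E e f \<and> \<beta> \<inter> \<gamma> = {}}.
        Poly_Mapping.single (expo \<beta>) 1 * Poly_Mapping.single (expo \<gamma>) 1 *
        (\<Sum>m\<in>Bset V E ends e f \<beta> \<gamma>. Poly_Mapping.single m 1))"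

definition eq_holds :: "'v set \<Rightarrow> 'e set \<Rightarrow> ('e \<Rightarrow> 'v \<times> 'v) \<Rightarrow> 'e \<Rightarrow> 'e
    \<Rightarrow> ('e \<Rightarrow>\<^sub>0 nat) \<Rightarrow> bool" where
  "eq_holds V E ends e f lam \<longleftrightarrow> coeff_M1 V E ends e f lam = Poly_Mapping.lookup (Rpoly V E ends e f) lam"

definition del_edges :: "'e set \<Rightarrow> 'e \<Rightarrow> 'e set" where
  "del_edges E g = E - {g}"

text \<open>Contraction G / g: the endpoint snd (ends g) is identified with fst (ends g)
  (nothing happens to the vertices if g is a loop), and g is removed.\<close>
definition contr_map :: "('e \<Rightarrow> 'v \<times> 'v) \<Rightarrow> 'e \<Rightarrow> 'v \<Rightarrow> 'v" where
  "contr_map ends g w = (if w = snd (ends g) then fst (ends g) else w)"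

definition contr_V :: "'v set \<Rightarrow> ('e \<Rightarrow> 'v \<times> 'v) \<Rightarrow> 'e \<Rightarrow> 'v set" where
  "contr_V V ends g = contr_map ends g ` V"

definition contr_ends :: "('e \<Rightarrow> 'v \<times> 'v) \<Rightarrow> 'e \<Rightarrow> 'e \<Rightarrow> 'v \<times> 'v" where
  "contr_ends ends g h = (contr_map ends g (fst (ends h)), contr_map ends g (snd (ends h)))"

end

theory Submission
  imports Defs
begin

text \<open>
  Both sides of the equality are coefficients of x^lam in polynomials whose monomials come from
  pairs of edge sets (F, F') as x^F x^F', so the degree in x_g counts how many of F, F' contain g.
  If that degree is 0, only pairs avoiding g contribute, and these have the same components,
  paracels and smoots in G and in G \ g. If it is 2, exactly the pairs with g in both sets
  contribute: in R_G a pair (\<beta>, \<gamma>) meeting g gives degree one, so g lies in both twins.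
  Contracting g, i.e. passing from F + g to F, preserves the number of components, and because the
  components of (V, F + g) are unions of fibres of the contraction map it sends them injectively
  to those of (V/g, F); so it also preserves paracels and smoots.
\<close>

section \<open>Contraction and connected components\<close>

lemma sym_rtrancl_adj: "sym ((adj ends F)\<^sup>*)"
  by (rule sym_rtrancl) (auto simp: adj_def sym_def)

lemma edge_in_rtrancl_adj: "h \<in> F \<Longrightarrow> (fst (ends h), snd (ends h)) \<in> (adj ends F)\<^sup>*"
  unfolding adj_def by (rule r_into_rtrancl) (auto intro: bexI[of _ h])

lemma comps_eq_image_comp_of: "comps V ends F = comp_of ends F ` V"
  by (auto simp: comps_def comp_of_def quotient_def)

lemma rtrancl_adj_if_contr_map_eq:
  assumes "contr_map ends g p = contr_map ends g q"
  shows "(p, q) \<in> (adj ends (insert g F))\<^sup>*"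
proof -
  have g: "(fst (ends g), snd (ends g)) \<in> (adj ends (insert g F))\<^sup>*"
    by (rule edge_in_rtrancl_adj) simp
  consider "p = q" | "p = fst (ends g)" "q = snd (ends g)" | "q = fst (ends g)" "p = snd (ends g)"
    using assms by (auto simp: contr_map_def split: if_splits)
  then show ?thesis
    by cases (use g symD[OF sym_rtrancl_adj g] in auto)
qed

lemma rtrancl_adj_contr:
  assumes "(x, y) \<in> (adj ends (insert g F))\<^sup>*"
  shows "(contr_map ends g x, contr_map ends g y) \<in> (adj (contr_ends ends g) F)\<^sup>*"
  using assms
proof (induction rule: rtrancl_induct)
  case base
  then show ?case by simp
next
  case (step y z)
  from step(2) obtain h where h: "h \<in> insert g F" "ends h = (y, z) \<or> ends h = (z, y)"
    unfolding adj_def by auto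
  have "(contr_map ends g y, contr_map ends g z) \<in> (adj (contr_ends ends g) F)\<^sup>="
  proof (cases "h = g")
    case True
    then have "contr_map ends g y = contr_map ends g z"
      using h by (cases "ends g") (auto simp: contr_map_def)
    then show ?thesis by simp
  next
    case False
    then show ?thesis using h by (auto simp: adj_def contr_ends_def intro!: bexI[of _ h])
  qed
  with step(3) show ?case by (auto intro: rtrancl_into_rtrancl)
qed

lemma comp_of_contr:
  "comp_of (contr_ends ends g) F (contr_map ends g x)
    = contr_map ends g ` comp_of ends (insert g F) x"
  (is "?K = ?c ` ?C")
proof
  show "?c ` ?C \<subseteq> ?K"
    unfolding comp_of_def using rtrancl_adj_contr by fastforce
next
  have "z \<in> ?c ` ?C" if "(?c x, z) \<in> (adj (contr_ends ends g) F)\<^sup>*" for z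
    using that
  proof (induction rule: rtrancl_induct)
    case base
    then show ?case by (auto simp: comp_of_def)
  next
    case (step z z')
    then obtain y where y: "z = contr_map ends g y" "(x, y) \<in> (adj ends (insert g F))\<^sup>*"
      by (auto simp: comp_of_def)
    from step(2) obtain h where h: "h \<in> F"
      "contr_ends ends g h = (z, z') \<or> contr_ends ends g h = (z', z)"
      unfolding adj_def by blast
    then obtain w w' where w: "ends h = (w, w') \<or> ends h = (w', w)"
      "contr_map ends g w = z" "contr_map ends g w' = z'"
      unfolding contr_ends_def by (metis prod.collapse prod.inject)
    have "(w, w') \<in> adj ends (insert g F)"
      using h(1) w(1) unfolding adj_def by blast
    moreover have "(y, w) \<in> (adj ends (insert g F))\<^sup>*"
      using w(2) y(1) by (intro rtrancl_adj_if_contr_map_eq) simp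
    ultimately have "(x, w') \<in> (adj ends (insert g F))\<^sup>*"
      using y(2) by (meson rtrancl.rtrancl_into_rtrancl rtrancl_trans)
    with w(3) show ?case by (auto simp: comp_of_def)
  qed
  then show "?K \<subseteq> ?c ` ?C"
    by (auto simp: comp_of_def)
qed

lemma comp_of_saturated:
  "contr_map ends g -` contr_map ends g ` comp_of ends (insert g F) x = comp_of ends (insert g F) x"
  (is "?c -` ?c ` ?C = ?C")
proof
  show "?c -` ?c ` ?C \<subseteq> ?C"
  proof
    fix y assume "y \<in> ?c -` ?c ` ?C"
    then obtain z where "(x, z) \<in> (adj ends (insert g F))\<^sup>*" "?c z = ?c y"
      by (auto simp: comp_of_def)
    then show "y \<in> ?C"
      unfolding comp_of_def by (auto intro: rtrancl_trans rtrancl_adj_if_contr_map_eq)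
  qed
qed auto

lemma inj_on_image_saturated: "inj_on (image c) {A. c -` c ` A = A}"
proof (rule inj_onI)
  fix A B assume "A \<in> {A. c -` c ` A = A}" "B \<in> {A. c -` c ` A = A}" "c ` A = c ` B"
  then have "A = c -` c ` A" "c -` c ` B = B" "c ` A = c ` B" by simp_all
  then show "A = B" by (simp only:)
qed

lemma comps_contr:
  "comps (contr_V V ends g) (contr_ends ends g) F
    = image (contr_map ends g) ` comps V ends (insert g F)"
  by (simp add: comps_eq_image_comp_of contr_V_def image_image comp_of_contr)

lemma comps_saturated:
  "comps V ends (insert g F) \<subseteq> {A. contr_map ends g -` contr_map ends g ` A = A}"
  by (simp add: comps_eq_image_comp_of image_subset_iff comp_of_saturated)

lemma ncomp_contr:
  "ncomp (contr_V V ends g) (contr_ends ends g) F = ncomp V ends (insert g F)"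
  unfolding ncomp_def comps_contr
  by (rule card_image) (rule inj_on_subset[OF inj_on_image_saturated comps_saturated])

lemma comps_contr_eq_iff:
  "comps (contr_V V ends g) (contr_ends ends g) F1 = comps (contr_V V ends g) (contr_ends ends g) F2
     \<longleftrightarrow> comps V ends (insert g F1) = comps V ends (insert g F2)"
  unfolding comps_contr
  by (rule inj_on_image_eq_iff[OF inj_on_image_saturated comps_saturated comps_saturated])

lemma endpoint_comps_contr_eq_iff:
  "{comp_of (contr_ends ends g) F (fst (contr_ends ends g h)),
     comp_of (contr_ends ends g) F (snd (contr_ends ends g h))}
   = {comp_of (contr_ends ends g) F (fst (contr_ends ends g h')),
      comp_of (contr_ends ends g) F (snd (contr_ends ends g h'))}
   \<longleftrightarrow> {comp_of ends (insert g F) (fst (ends h)), comp_of ends (insert g F) (snd (ends h))}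
     = {comp_of ends (insert g F) (fst (ends h')), comp_of ends (insert g F) (snd (ends h'))}"
proof -
  have sat: "{comp_of ends (insert g F) (fst (ends k)), comp_of ends (insert g F) (snd (ends k))}
      \<subseteq> {A. contr_map ends g -` contr_map ends g ` A = A}" for k
    by (simp add: comp_of_saturated)
  show ?thesis
    unfolding contr_ends_def fst_conv snd_conv comp_of_contr
    using inj_on_image_eq_iff[OF inj_on_image_saturated sat sat] by simp
qed

lemma lookup_expo: "finite F \<Longrightarrow> Poly_Mapping.lookup (expo F) h = (if h \<in> F then 1 else 0)"
  by (simp add: expo_def lookup_sum lookup_single when_def)

lemma lookup_expo_notin:
  assumes "g \<notin> F"
  shows "Poly_Mapping.lookup (expo F) g = 0"
proof (cases "finite F")
  case True
  then show ?thesis using assms by (simp add: lookup_expo)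
next
  case False
  then show ?thesis by (simp add: expo_def)
qed

lemma lookup_expo_add_expo_eq_0_iff:
  "finite F1 \<Longrightarrow> finite F2 \<Longrightarrow>
    Poly_Mapping.lookup (expo F1 + expo F2) g = 0 \<longleftrightarrow> g \<notin> F1 \<and> g \<notin> F2"
  by (simp add: lookup_add lookup_expo)

lemma lookup_expo_add_expo_eq_2_iff:
  "finite F1 \<Longrightarrow> finite F2 \<Longrightarrow>
    Poly_Mapping.lookup (expo F1 + expo F2) g = 2 \<longleftrightarrow> g \<in> F1 \<and> g \<in> F2"
  by (simp add: lookup_add lookup_expo)

lemma expo_insert: "finite F \<Longrightarrow> g \<notin> F \<Longrightarrow> expo (insert g F) = expo F + Poly_Mapping.single g 1"
  unfolding expo_def by (simp add: sum.insert add.commute)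

lemma expo_insert_add_expo_insert:
  assumes "finite F1" "finite F2" "g \<notin> F1" "g \<notin> F2"
  shows "expo (insert g F1) + expo (insert g F2) = expo F1 + expo F2 + Poly_Mapping.single g 2"
proof -
  have "Poly_Mapping.single g (2::nat) = Poly_Mapping.single g 1 + Poly_Mapping.single g 1"
    by (simp flip: single_add one_add_one)
  then show ?thesis
    using assms by (simp add: expo_insert ac_simps)
qed

section \<open>Paracels, smoots and twins under deletion and contraction\<close>

lemma Eef_del_edges: "Eef (E - {g}) e f = Eef E e f - {g}"
  by (auto simp: Eef_def)

lemma paracel_del:
  assumes "g \<notin> F"
  shows "paracel V (E - {g}) ends e f F \<longleftrightarrow> paracel V E ends e f F"
  using assms by (auto simp: paracel_def Eef_del_edges)

lemma smoot_del:
  assumes "h \<noteq> g"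
  shows "smoot V (E - {g}) ends e f F h \<longleftrightarrow> smoot V E ends e f F h"
  using assms by (simp add: smoot_def Eef_del_edges)

lemma Aset_del:
  assumes "g \<notin> \<beta>" "g \<notin> \<gamma>"
  shows "Aset V (E - {g}) ends e f \<beta> \<gamma> = {\<alpha> \<in> Aset V E ends e f \<beta> \<gamma>. g \<notin> \<alpha>}"
proof -
  have "paracel V (E - {g}) ends e f (\<gamma> \<union> \<alpha>) \<longleftrightarrow> paracel V E ends e f (\<gamma> \<union> \<alpha>)" if "g \<notin> \<alpha>" for \<alpha>
    using assms that by (intro paracel_del) simp
  moreover have "smoot V (E - {g}) ends e f F h \<longleftrightarrow> smoot V E ends e f F h" if "h \<in> \<beta>" for F h
    using assms that by (intro smoot_del) auto
  ultimately show ?thesis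
    unfolding Aset_def Eef_del_edges by auto
qed

lemma paracel_contr:
  assumes "g \<in> Eef E e f" "g \<notin> F"
  shows "paracel (contr_V V ends g) (E - {g}) (contr_ends ends g) e f F
     \<longleftrightarrow> paracel V E ends e f (insert g F)"
proof -
  have "insert e (insert g F) = insert g (insert e F)"
    and "insert f (insert g F) = insert g (insert f F)"
    by auto
  then show ?thesis
    using assms unfolding paracel_def ncomp_contr comps_contr_eq_iff Eef_del_edges by auto
qed

lemma smoot_contr:
  assumes "h \<noteq> g"
  shows "smoot (contr_V V ends g) (E - {g}) (contr_ends ends g) e f F h
     \<longleftrightarrow> smoot V E ends e f (insert g F) h"
  using assms unfolding smoot_def endpoint_comps_contr_eq_iff Eef_del_edges by auto

lemma Aset_contr:
  assumes "g \<in> Eef E e f" "g \<notin> \<beta>" "g \<notin> \<gamma>" "g \<notin> \<alpha>"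
  shows "\<alpha> \<in> Aset (contr_V V ends g) (E - {g}) (contr_ends ends g) e f \<beta> \<gamma>
     \<longleftrightarrow> insert g \<alpha> \<in> Aset V E ends e f \<beta> \<gamma>"
proof -
  have "\<gamma> \<union> insert g \<alpha> = insert g (\<gamma> \<union> \<alpha>)"
    by auto
  moreover have "paracel (contr_V V ends g) (E - {g}) (contr_ends ends g) e f (\<gamma> \<union> \<alpha>)
      \<longleftrightarrow> paracel V E ends e f (insert g (\<gamma> \<union> \<alpha>))"
    using assms by (intro paracel_contr) auto
  moreover have "smoot (contr_V V ends g) (E - {g}) (contr_ends ends g) e f F h
      \<longleftrightarrow> smoot V E ends e f (insert g F) h" if "h \<in> \<beta>" for F h
    using assms that by (intro smoot_contr) auto
  ultimately show ?thesis
    using assms unfolding Aset_def Eef_del_edges by auto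
qed

lemma Aset_subset_Eef: "\<alpha> \<in> Aset V E ends e f \<beta> \<gamma> \<Longrightarrow> \<alpha> \<subseteq> Eef E e f"
  by (simp add: Aset_def)

lemma finite_Aset_member:
  assumes "finite E" "\<alpha> \<in> Aset V E ends e f \<beta> \<gamma>"
  shows "finite \<alpha>"
proof (rule finite_subset)
  show "\<alpha> \<subseteq> E"
    using Aset_subset_Eef[OF assms(2)] by (auto simp: Eef_def)
qed fact

lemma Bset_del:
  assumes "finite E" "g \<notin> \<beta>" "g \<notin> \<gamma>"
  shows "Bset V (E - {g}) ends e f \<beta> \<gamma> = {m \<in> Bset V E ends e f \<beta> \<gamma>. Poly_Mapping.lookup m g = 0}"
    (is "?B' = ?B0")
proof
  show "?B' \<subseteq> ?B0"
  proof
    fix m assume "m \<in> ?B'"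
    then obtain \<alpha> \<alpha>' where m: "m = expo \<alpha> + expo \<alpha>'"
      and A: "\<alpha> \<in> Aset V E ends e f \<beta> \<gamma>" "\<alpha>' \<in> Aset V E ends e f \<beta> \<gamma>"
        "\<alpha> \<inter> \<alpha>' \<in> Aset V E ends e f \<beta> \<gamma>" "g \<notin> \<alpha>" "g \<notin> \<alpha>'"
      unfolding Bset_def Aset_del[OF assms(2,3)] by blast
    then have "m \<in> Bset V E ends e f \<beta> \<gamma>"
      unfolding Bset_def by blast
    moreover have "Poly_Mapping.lookup m g = 0"
      using m A finite_Aset_member[OF assms(1) A(1)] finite_Aset_member[OF assms(1) A(2)]
      by (simp add: lookup_expo_add_expo_eq_0_iff)
    ultimately show "m \<in> ?B0"
      by simp
  qed
next
  show "?B0 \<subseteq> ?B'"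
  proof
    fix m assume "m \<in> ?B0"
    then obtain \<alpha> \<alpha>' where m: "m = expo \<alpha> + expo \<alpha>'" "Poly_Mapping.lookup m g = 0"
      and A: "\<alpha> \<in> Aset V E ends e f \<beta> \<gamma>" "\<alpha>' \<in> Aset V E ends e f \<beta> \<gamma>"
        "\<alpha> \<inter> \<alpha>' \<in> Aset V E ends e f \<beta> \<gamma>"
      unfolding Bset_def by blast
    have "g \<notin> \<alpha>" "g \<notin> \<alpha>'"
      using m finite_Aset_member[OF assms(1) A(1)] finite_Aset_member[OF assms(1) A(2)]
      by (simp_all add: lookup_expo_add_expo_eq_0_iff)
    with m A show "m \<in> ?B'"
      unfolding Bset_def Aset_del[OF assms(2,3)] by blast
  qed
qed

lemma twins_contr:
  assumes "g \<in> Eef E e f" "g \<notin> \<beta>" "g \<notin> \<gamma>" "g \<notin> \<alpha>" "g \<notin> \<alpha>'"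
  shows "\<alpha> \<in> Aset (contr_V V ends g) (E - {g}) (contr_ends ends g) e f \<beta> \<gamma>
      \<and> \<alpha>' \<in> Aset (contr_V V ends g) (E - {g}) (contr_ends ends g) e f \<beta> \<gamma>
      \<and> \<alpha> \<inter> \<alpha>' \<in> Aset (contr_V V ends g) (E - {g}) (contr_ends ends g) e f \<beta> \<gamma>
    \<longleftrightarrow> insert g \<alpha> \<in> Aset V E ends e f \<beta> \<gamma> \<and> insert g \<alpha>' \<in> Aset V E ends e f \<beta> \<gamma>
      \<and> insert g \<alpha> \<inter> insert g \<alpha>' \<in> Aset V E ends e f \<beta> \<gamma>"
proof -
  have "insert g \<alpha> \<inter> insert g \<alpha>' = insert g (\<alpha> \<inter> \<alpha>')"
    by auto
  then show ?thesis
    using assms by (simp add: Aset_contr[OF assms(1-3)])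
qed

lemma Bset_contr:
  assumes "finite E" "g \<in> Eef E e f" "g \<notin> \<beta>" "g \<notin> \<gamma>"
  shows "{m \<in> Bset V E ends e f \<beta> \<gamma>. Poly_Mapping.lookup m g = 2}
    = (\<lambda>m. m + Poly_Mapping.single g 2)
        ` Bset (contr_V V ends g) (E - {g}) (contr_ends ends g) e f \<beta> \<gamma>"
    (is "?B2 = (\<lambda>m. m + ?s) ` ?B'")
proof
  show "?B2 \<subseteq> (\<lambda>m. m + ?s) ` ?B'"
  proof
    fix m assume "m \<in> ?B2"
    then obtain \<alpha> \<alpha>' where m: "m = expo \<alpha> + expo \<alpha>'" "Poly_Mapping.lookup m g = 2"
      and A: "\<alpha> \<in> Aset V E ends e f \<beta> \<gamma>" "\<alpha>' \<in> Aset V E ends e f \<beta> \<gamma>"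
        "\<alpha> \<inter> \<alpha>' \<in> Aset V E ends e f \<beta> \<gamma>"
      unfolding Bset_def by blast
    have fin: "finite \<alpha>" "finite \<alpha>'"
      using finite_Aset_member[OF assms(1) A(1)] finite_Aset_member[OF assms(1) A(2)] .
    then have "g \<in> \<alpha>" "g \<in> \<alpha>'"
      using m by (simp_all add: lookup_expo_add_expo_eq_2_iff)
    then have ins: "\<alpha> = insert g (\<alpha> - {g})" "\<alpha>' = insert g (\<alpha>' - {g})"
      by auto
    then have "expo (\<alpha> - {g}) + expo (\<alpha>' - {g}) \<in> ?B'"
      using A twins_contr[OF assms(2-4), of "\<alpha> - {g}" "\<alpha>' - {g}" V ends]
      unfolding Bset_def by auto
    moreover have "m = expo (\<alpha> - {g}) + expo (\<alpha>' - {g}) + ?s"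
      using fin ins m(1) expo_insert_add_expo_insert[of "\<alpha> - {g}" "\<alpha>' - {g}" g] by simp
    ultimately show "m \<in> (\<lambda>m. m + ?s) ` ?B'"
      by blast
  qed
next
  show "(\<lambda>m. m + ?s) ` ?B' \<subseteq> ?B2"
  proof
    fix m assume "m \<in> (\<lambda>m. m + ?s) ` ?B'"
    then obtain \<alpha> \<alpha>' where m: "m = expo \<alpha> + expo \<alpha>' + ?s"
      and A: "\<alpha> \<in> Aset (contr_V V ends g) (E - {g}) (contr_ends ends g) e f \<beta> \<gamma>"
        "\<alpha>' \<in> Aset (contr_V V ends g) (E - {g}) (contr_ends ends g) e f \<beta> \<gamma>"
        "\<alpha> \<inter> \<alpha>' \<in> Aset (contr_V V ends g) (E - {g}) (contr_ends ends g) e f \<beta> \<gamma>"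
      unfolding Bset_def by blast
    have fin: "finite \<alpha>" "finite \<alpha>'"
      using finite_Aset_member[OF _ A(1)] finite_Aset_member[OF _ A(2)] assms(1) by simp_all
    have g: "g \<notin> \<alpha>" "g \<notin> \<alpha>'"
      using Aset_subset_Eef[OF A(1)] Aset_subset_Eef[OF A(2)] by (auto simp: Eef_del_edges)
    have m': "m = expo (insert g \<alpha>) + expo (insert g \<alpha>')"
      using m expo_insert_add_expo_insert[OF fin g] by simp
    then have "m \<in> Bset V E ends e f \<beta> \<gamma>"
      using A twins_contr[OF assms(2-4) g] unfolding Bset_def by blast
    moreover have "Poly_Mapping.lookup m g = 2"
      using fin unfolding m' by (simp add: lookup_expo_add_expo_eq_2_iff)
    ultimately show "m \<in> ?B2"
      by simp
  qed
qed

section \<open>The coefficients of M_ef(1)\<close>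

definition Tindex :: "'e set \<Rightarrow> 'e set \<Rightarrow> 'e set \<Rightarrow> 'e set set" where
  "Tindex E A B = {F. F \<subseteq> E \<and> A \<subseteq> F \<and> F \<inter> B = {}}"

definition Tpairs :: "'e set \<Rightarrow> 'e set \<Rightarrow> 'e set \<Rightarrow> 'e set \<Rightarrow> 'e set \<Rightarrow> ('e \<Rightarrow>\<^sub>0 nat)
    \<Rightarrow> ('e set \<times> 'e set) set" where
  "Tpairs E A B C D \<mu> = {p \<in> Tindex E A B \<times> Tindex E C D. expo (fst p) + expo (snd p) = \<mu>}"

lemma lookup_Tpoly_mult:
  assumes "finite E"
  shows "Poly_Mapping.lookup (Tpoly V E ends A B * Tpoly V E ends C D) \<mu>
    = (\<Sum>(F1, F2)\<in>Tpairs E A B C D \<mu>. monom 1 (ncomp V ends F1 + ncomp V ends F2))"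
proof -
  have fin: "finite (Tindex E A B \<times> Tindex E C D)"
    using assms by (auto simp: Tindex_def intro: finite_subset[of _ "Pow E"])
  have "Tpoly V E ends A B * Tpoly V E ends C D
      = (\<Sum>(F1, F2)\<in>Tindex E A B \<times> Tindex E C D.
          Poly_Mapping.single (expo F1 + expo F2) (monom 1 (ncomp V ends F1 + ncomp V ends F2)))"
    unfolding Tpoly_def Tindex_def[symmetric] sum_product sum.cartesian_product
    by (simp add: mult_single mult_monom)
  then have "Poly_Mapping.lookup (Tpoly V E ends A B * Tpoly V E ends C D) \<mu>
      = (\<Sum>p\<in>Tindex E A B \<times> Tindex E C D. if expo (fst p) + expo (snd p) = \<mu>
          then monom 1 (ncomp V ends (fst p) + ncomp V ends (snd p)) else 0)"
    by (simp add: lookup_sum lookup_single when_def case_prod_unfold)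
  also have "\<dots> = (\<Sum>(F1, F2)\<in>Tpairs E A B C D \<mu>. monom 1 (ncomp V ends F1 + ncomp V ends F2))"
    unfolding Tpairs_def by (simp add: sum.inter_filter[OF fin] case_prod_unfold)
  finally show ?thesis .
qed

lemma Tpairs_del:
  assumes "finite E" "Poly_Mapping.lookup \<mu> g = 0"
  shows "Tpairs (E - {g}) A B C D \<mu> = Tpairs E A B C D \<mu>"
proof (intro equalityI subsetI)
  fix p assume "p \<in> Tpairs (E - {g}) A B C D \<mu>"
  then show "p \<in> Tpairs E A B C D \<mu>"
    by (auto simp: Tpairs_def Tindex_def)
next
  fix p assume p: "p \<in> Tpairs E A B C D \<mu>"
  then have "finite (fst p)" "finite (snd p)"
    by (auto simp: Tpairs_def Tindex_def intro: rev_finite_subset[OF assms(1)])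
  moreover have "Poly_Mapping.lookup (expo (fst p) + expo (snd p)) g = 0"
    using p assms(2) by (simp add: Tpairs_def)
  ultimately have "g \<notin> fst p" "g \<notin> snd p"
    by (simp_all add: lookup_expo_add_expo_eq_0_iff)
  with p show "p \<in> Tpairs (E - {g}) A B C D \<mu>"
    by (auto simp: Tpairs_def Tindex_def)
qed

lemma Tpairs_contr:
  assumes "finite E" "g \<in> E" "g \<notin> A \<union> B \<union> C \<union> D" "Poly_Mapping.lookup \<mu> g = 0"
  shows "Tpairs E A B C D (\<mu> + Poly_Mapping.single g 2)
    = (\<lambda>(F1, F2). (insert g F1, insert g F2)) ` Tpairs (E - {g}) A B C D \<mu>"
proof
  show "Tpairs E A B C D (\<mu> + Poly_Mapping.single g 2)
      \<subseteq> (\<lambda>(F1, F2). (insert g F1, insert g F2)) ` Tpairs (E - {g}) A B C D \<mu>"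
  proof clarify
    fix F1 F2 assume F: "(F1, F2) \<in> Tpairs E A B C D (\<mu> + Poly_Mapping.single g 2)"
    then have fin: "finite F1" "finite F2"
      by (auto simp: Tpairs_def Tindex_def intro: rev_finite_subset[OF assms(1)])
    have sum: "expo F1 + expo F2 = \<mu> + Poly_Mapping.single g 2"
      using F by (simp add: Tpairs_def)
    then have "Poly_Mapping.lookup (expo F1 + expo F2) g = 2"
      using assms(4) by (simp add: lookup_add)
    then have "g \<in> F1" "g \<in> F2"
      using fin by (simp_all add: lookup_expo_add_expo_eq_2_iff)
    then have ins: "F1 = insert g (F1 - {g})" "F2 = insert g (F2 - {g})"
      by auto
    have "expo (F1 - {g}) + expo (F2 - {g}) + Poly_Mapping.single g 2 = \<mu> + Poly_Mapping.single g 2"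
      using sum ins expo_insert_add_expo_insert[of "F1 - {g}" "F2 - {g}" g] fin by simp
    then have "(F1 - {g}, F2 - {g}) \<in> Tpairs (E - {g}) A B C D \<mu>"
      using F assms(3) by (auto simp: Tpairs_def Tindex_def)
    moreover have "(F1, F2) = (\<lambda>(F1, F2). (insert g F1, insert g F2)) (F1 - {g}, F2 - {g})"
      using ins by simp
    ultimately show "(F1, F2)
        \<in> (\<lambda>(F1, F2). (insert g F1, insert g F2)) ` Tpairs (E - {g}) A B C D \<mu>"
      by (rule rev_image_eqI)
  qed
next
  show "(\<lambda>(F1, F2). (insert g F1, insert g F2)) ` Tpairs (E - {g}) A B C D \<mu>
      \<subseteq> Tpairs E A B C D (\<mu> + Poly_Mapping.single g 2)"
  proof clarify
    fix F1 F2 assume F: "(F1, F2) \<in> Tpairs (E - {g}) A B C D \<mu>"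
    then have "finite F1" "finite F2" "g \<notin> F1" "g \<notin> F2"
      by (auto simp: Tpairs_def Tindex_def intro: rev_finite_subset[OF assms(1)])
    then have "expo (insert g F1) + expo (insert g F2) = \<mu> + Poly_Mapping.single g 2"
      using F by (simp add: expo_insert_add_expo_insert Tpairs_def)
    then show "(insert g F1, insert g F2) \<in> Tpairs E A B C D (\<mu> + Poly_Mapping.single g 2)"
      using F assms(2,3) by (auto simp: Tpairs_def Tindex_def)
  qed
qed

lemma lookup_Tpoly_mult_del:
  assumes "finite E" "Poly_Mapping.lookup \<mu> g = 0"
  shows "Poly_Mapping.lookup (Tpoly V (E - {g}) ends A B * Tpoly V (E - {g}) ends C D) \<mu>
    = Poly_Mapping.lookup (Tpoly V E ends A B * Tpoly V E ends C D) \<mu>"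
  using assms by (simp add: lookup_Tpoly_mult Tpairs_del)

lemma lookup_Tpoly_mult_contr:
  assumes "finite E" "g \<in> E" "g \<notin> A \<union> B \<union> C \<union> D" "Poly_Mapping.lookup \<mu> g = 0"
  shows "Poly_Mapping.lookup (Tpoly V E ends A B * Tpoly V E ends C D) (\<mu> + Poly_Mapping.single g 2)
    = Poly_Mapping.lookup (Tpoly (contr_V V ends g) (E - {g}) (contr_ends ends g) A B
        * Tpoly (contr_V V ends g) (E - {g}) (contr_ends ends g) C D) \<mu>"
proof -
  have "inj_on (\<lambda>(F1, F2). (insert g F1, insert g F2)) (Tpairs (E - {g}) A B C D \<mu>)"
    by (rule inj_onI) (auto simp: Tpairs_def Tindex_def insert_ident)
  then show ?thesis
    using assms
    by (simp add: lookup_Tpoly_mult Tpairs_contr sum.reindex ncomp_contr case_prod_unfold)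
qed

lemma coeff_M1_del:
  assumes "finite E" "g \<notin> {e, f}" "Poly_Mapping.lookup lam g = 0"
  shows "coeff_M1 V (E - {g}) ends e f lam = coeff_M1 V E ends e f lam"
proof -
  have "Poly_Mapping.lookup (lam + Poly_Mapping.single e 1 + Poly_Mapping.single f 1) g = 0"
    using assms(2,3) by (auto simp: lookup_add lookup_single when_def)
  then show ?thesis
    unfolding coeff_M1_def Mnum_def lookup_minus using assms(1) by (simp add: lookup_Tpoly_mult_del)
qed

lemma coeff_M1_contr:
  assumes "finite E" "g \<in> E - {e, f}" "Poly_Mapping.lookup lam g = 0"
  shows "coeff_M1 V E ends e f (lam + Poly_Mapping.single g 2)
    = coeff_M1 (contr_V V ends g) (E - {g}) (contr_ends ends g) e f lam"
proof -
  let ?\<mu> = "lam + Poly_Mapping.single e 1 + Poly_Mapping.single f 1"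
  have "Poly_Mapping.lookup ?\<mu> g = 0"
    using assms(2,3) by (auto simp: lookup_add lookup_single when_def)
  moreover have "lam + Poly_Mapping.single g 2 + Poly_Mapping.single e 1 + Poly_Mapping.single f 1
      = ?\<mu> + Poly_Mapping.single g 2"
    by (simp add: ac_simps)
  ultimately show ?thesis
    unfolding coeff_M1_def Mnum_def lookup_minus using assms(1,2)
    by (simp add: lookup_Tpoly_mult_contr)
qed

section \<open>The coefficients of R_G\<close>

definition disjoint_pairs :: "'e set \<Rightarrow> ('e set \<times> 'e set) set" where
  "disjoint_pairs S = {(\<beta>, \<gamma>). \<beta> \<subseteq> S \<and> \<gamma> \<subseteq> S \<and> \<beta> \<inter> \<gamma> = {}}"

definition coeff_R_summand :: "'v set \<Rightarrow> 'e set \<Rightarrow> ('e \<Rightarrow> 'v \<times> 'v) \<Rightarrow> 'e \<Rightarrow> 'e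
    \<Rightarrow> ('e \<Rightarrow>\<^sub>0 nat) \<Rightarrow> 'e set \<Rightarrow> 'e set \<Rightarrow> int" where
  "coeff_R_summand V E ends e f lam \<beta> \<gamma> =
     int (card {m \<in> Bset V E ends e f \<beta> \<gamma>. expo \<beta> + expo \<gamma> + m = lam})"

lemma finite_Bset:
  assumes "finite E"
  shows "finite (Bset V E ends e f \<beta> \<gamma>)"
proof (rule finite_subset)
  show "Bset V E ends e f \<beta> \<gamma> \<subseteq> (\<lambda>(\<alpha>, \<alpha>'). expo \<alpha> + expo \<alpha>') ` (Pow E \<times> Pow E)"
    using Aset_subset_Eef by (fastforce simp: Bset_def Eef_def)
  show "finite ((\<lambda>(\<alpha>, \<alpha>'). expo \<alpha> + expo \<alpha>') ` (Pow E \<times> Pow E))"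
    using assms by simp
qed

lemma lookup_Rpoly:
  assumes "finite E"
  shows "Poly_Mapping.lookup (Rpoly V E ends e f) lam
    = (\<Sum>(\<beta>, \<gamma>)\<in>disjoint_pairs (Eef E e f). coeff_R_summand V E ends e f lam \<beta> \<gamma>)"
proof -
  have "Poly_Mapping.lookup (Poly_Mapping.single (expo \<beta>) 1 * Poly_Mapping.single (expo \<gamma>) 1
      * (\<Sum>m\<in>Bset V E ends e f \<beta> \<gamma>. Poly_Mapping.single m (1::int))) lam
    = coeff_R_summand V E ends e f lam \<beta> \<gamma>" for \<beta> \<gamma>
  proof -
    have "Poly_Mapping.single (expo \<beta>) 1 * Poly_Mapping.single (expo \<gamma>) 1
        * (\<Sum>m\<in>Bset V E ends e f \<beta> \<gamma>. Poly_Mapping.single m (1::int))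
      = (\<Sum>m\<in>Bset V E ends e f \<beta> \<gamma>. Poly_Mapping.single (expo \<beta> + expo \<gamma> + m) 1)"
      by (simp add: mult_single sum_distrib_left)
    then show ?thesis
      unfolding coeff_R_summand_def
      by (simp add: lookup_sum lookup_single when_def finite_Bset[OF assms]
          flip: sum.inter_filter) (simp only: eq_commute)
  qed
  then show ?thesis
    unfolding Rpoly_def disjoint_pairs_def[symmetric] lookup_sum by (simp add: case_prod_unfold)
qed

lemma coeff_R_summand_eq_0:
  assumes "finite E" "(\<beta>, \<gamma>) \<in> disjoint_pairs (Eef E e f)" "g \<in> \<beta> \<union> \<gamma>"
    and "Poly_Mapping.lookup lam g \<noteq> 1"
  shows "coeff_R_summand V E ends e f lam \<beta> \<gamma> = 0"
proof -
  have "Poly_Mapping.lookup (expo \<beta> + expo \<gamma> + m) g = 1" if mB: "m \<in> Bset V E ends e f \<beta> \<gamma>" for m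
  proof -
    obtain \<alpha> \<alpha>' where m: "m = expo \<alpha> + expo \<alpha>'"
      and A: "\<alpha> \<in> Aset V E ends e f \<beta> \<gamma>" "\<alpha>' \<in> Aset V E ends e f \<beta> \<gamma>"
      using mB unfolding Bset_def by blast
    have "g \<notin> \<alpha>" "g \<notin> \<alpha>'"
      using A assms(3) by (auto simp: Aset_def)
    moreover have "finite \<beta>" "finite \<gamma>"
      using assms(2) by (auto simp: disjoint_pairs_def Eef_def intro: rev_finite_subset[OF assms(1)])
    ultimately show ?thesis
      using assms(2,3) by (auto simp: m lookup_add lookup_expo lookup_expo_notin disjoint_pairs_def)
  qed
  then have empty: "{m \<in> Bset V E ends e f \<beta> \<gamma>. expo \<beta> + expo \<gamma> + m = lam} = {}"
    using assms(4) by auto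
  show ?thesis
    unfolding coeff_R_summand_def empty by simp
qed

lemma lookup_Rpoly_avoiding:
  assumes "finite E" "Poly_Mapping.lookup lam g \<noteq> 1"
  shows "Poly_Mapping.lookup (Rpoly V E ends e f) lam
    = (\<Sum>(\<beta>, \<gamma>)\<in>disjoint_pairs (Eef (E - {g}) e f). coeff_R_summand V E ends e f lam \<beta> \<gamma>)"
  unfolding lookup_Rpoly[OF assms(1)]
proof (rule sum.mono_neutral_right)
  show "finite (disjoint_pairs (Eef E e f))"
    using assms(1)
    by (auto simp: disjoint_pairs_def Eef_def intro: finite_subset[of _ "Pow E \<times> Pow E"])
  show "disjoint_pairs (Eef (E - {g}) e f) \<subseteq> disjoint_pairs (Eef E e f)"
    by (auto simp: disjoint_pairs_def Eef_def)
  show "\<forall>p\<in>disjoint_pairs (Eef E e f) - disjoint_pairs (Eef (E - {g}) e f).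
      (case p of (\<beta>, \<gamma>) \<Rightarrow> coeff_R_summand V E ends e f lam \<beta> \<gamma>) = 0"
  proof clarify
    fix \<beta> \<gamma>
    assume "(\<beta>, \<gamma>) \<in> disjoint_pairs (Eef E e f)"
      and "(\<beta>, \<gamma>) \<notin> disjoint_pairs (Eef (E - {g}) e f)"
    then show "coeff_R_summand V E ends e f lam \<beta> \<gamma> = 0"
      by (intro coeff_R_summand_eq_0[OF assms(1) _ _ assms(2)])
        (auto simp: disjoint_pairs_def Eef_del_edges)
  qed
qed

lemma coeff_R_summand_del:
  assumes "finite E" "g \<notin> \<beta>" "g \<notin> \<gamma>" "Poly_Mapping.lookup lam g = 0"
  shows "coeff_R_summand V (E - {g}) ends e f lam \<beta> \<gamma> = coeff_R_summand V E ends e f lam \<beta> \<gamma>"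
proof -
  have "Poly_Mapping.lookup m g = 0" if "expo \<beta> + expo \<gamma> + m = lam" for m
    using that assms(2-4) by (auto simp: lookup_add lookup_expo_notin)
  then have "{m \<in> Bset V (E - {g}) ends e f \<beta> \<gamma>. expo \<beta> + expo \<gamma> + m = lam}
      = {m \<in> Bset V E ends e f \<beta> \<gamma>. expo \<beta> + expo \<gamma> + m = lam}"
    unfolding Bset_del[OF assms(1-3)] by blast
  then show ?thesis
    by (simp add: coeff_R_summand_def)
qed

lemma coeff_R_summand_contr:
  assumes "finite E" "g \<in> Eef E e f" "g \<notin> \<beta>" "g \<notin> \<gamma>" "Poly_Mapping.lookup lam g = 0"
  shows "coeff_R_summand V E ends e f (lam + Poly_Mapping.single g 2) \<beta> \<gamma>
    = coeff_R_summand (contr_V V ends g) (E - {g}) (contr_ends ends g) e f lam \<beta> \<gamma>"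
proof -
  let ?s = "Poly_Mapping.single g (2::nat)"
  let ?B' = "Bset (contr_V V ends g) (E - {g}) (contr_ends ends g) e f \<beta> \<gamma>"
  have "Poly_Mapping.lookup m g = 2" if "expo \<beta> + expo \<gamma> + m = lam + ?s" for m
  proof -
    have "Poly_Mapping.lookup (expo \<beta> + expo \<gamma> + m) g = Poly_Mapping.lookup (lam + ?s) g"
      using that by simp
    then show ?thesis
      using assms(3-5) by (simp add: lookup_add lookup_expo_notin)
  qed
  then have "{m \<in> Bset V E ends e f \<beta> \<gamma>. expo \<beta> + expo \<gamma> + m = lam + ?s}
      = {m \<in> {m \<in> Bset V E ends e f \<beta> \<gamma>. Poly_Mapping.lookup m g = 2}.
          expo \<beta> + expo \<gamma> + m = lam + ?s}"
    by auto
  also have "\<dots> = (\<lambda>m. m + ?s) ` {m \<in> ?B'. expo \<beta> + expo \<gamma> + m = lam}"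
    unfolding Bset_contr[OF assms(1-4)] by (auto simp flip: add.assoc)
  finally show ?thesis
    unfolding coeff_R_summand_def by (simp add: card_image)
qed

lemma lookup_Rpoly_del:
  assumes "finite E" "Poly_Mapping.lookup lam g = 0"
  shows "Poly_Mapping.lookup (Rpoly V (E - {g}) ends e f) lam
    = Poly_Mapping.lookup (Rpoly V E ends e f) lam"
proof -
  have "Poly_Mapping.lookup (Rpoly V (E - {g}) ends e f) lam
      = (\<Sum>(\<beta>, \<gamma>)\<in>disjoint_pairs (Eef (E - {g}) e f).
          coeff_R_summand V (E - {g}) ends e f lam \<beta> \<gamma>)"
    using assms(1) by (simp add: lookup_Rpoly)
  also have "\<dots> = (\<Sum>(\<beta>, \<gamma>)\<in>disjoint_pairs (Eef (E - {g}) e f).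
      coeff_R_summand V E ends e f lam \<beta> \<gamma>)"
  proof (rule sum.cong[OF refl], clarify)
    fix \<beta> \<gamma> assume "(\<beta>, \<gamma>) \<in> disjoint_pairs (Eef (E - {g}) e f)"
    then show "coeff_R_summand V (E - {g}) ends e f lam \<beta> \<gamma>
        = coeff_R_summand V E ends e f lam \<beta> \<gamma>"
      by (intro coeff_R_summand_del[OF assms(1) _ _ assms(2)])
        (auto simp: disjoint_pairs_def Eef_def)
  qed
  also have "\<dots> = Poly_Mapping.lookup (Rpoly V E ends e f) lam"
    by (rule lookup_Rpoly_avoiding[symmetric]) (use assms in simp_all)
  finally show ?thesis .
qed

lemma lookup_Rpoly_contr:
  assumes "finite E" "g \<in> Eef E e f" "Poly_Mapping.lookup lam g = 0"
  shows "Poly_Mapping.lookup (Rpoly V E ends e f) (lam + Poly_Mapping.single g 2)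
    = Poly_Mapping.lookup (Rpoly (contr_V V ends g) (E - {g}) (contr_ends ends g) e f) lam"
proof -
  have "Poly_Mapping.lookup (Rpoly V E ends e f) (lam + Poly_Mapping.single g 2)
      = (\<Sum>(\<beta>, \<gamma>)\<in>disjoint_pairs (Eef (E - {g}) e f).
          coeff_R_summand V E ends e f (lam + Poly_Mapping.single g 2) \<beta> \<gamma>)"
    using assms by (simp add: lookup_Rpoly_avoiding lookup_add)
  also have "\<dots> = (\<Sum>(\<beta>, \<gamma>)\<in>disjoint_pairs (Eef (E - {g}) e f).
      coeff_R_summand (contr_V V ends g) (E - {g}) (contr_ends ends g) e f lam \<beta> \<gamma>)"
  proof (rule sum.cong[OF refl], clarify)
    fix \<beta> \<gamma> assume "(\<beta>, \<gamma>) \<in> disjoint_pairs (Eef (E - {g}) e f)"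
    then show "coeff_R_summand V E ends e f (lam + Poly_Mapping.single g 2) \<beta> \<gamma>
        = coeff_R_summand (contr_V V ends g) (E - {g}) (contr_ends ends g) e f lam \<beta> \<gamma>"
      by (intro coeff_R_summand_contr[OF assms(1,2) _ _ assms(3)])
        (auto simp: disjoint_pairs_def Eef_def)
  qed
  also have "\<dots>
      = Poly_Mapping.lookup (Rpoly (contr_V V ends g) (E - {g}) (contr_ends ends g) e f) lam"
    using assms(1) by (simp add: lookup_Rpoly)
  finally show ?thesis .
qed

lemma eq_holds_del:
  assumes "finite E" "g \<notin> {e, f}" "Poly_Mapping.lookup lam g = 0"
  shows "eq_holds V (E - {g}) ends e f lam \<longleftrightarrow> eq_holds V E ends e f lam"
  using assms by (simp add: eq_holds_def coeff_M1_del lookup_Rpoly_del)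

lemma eq_holds_contr:
  assumes "finite E" "g \<in> E - {e, f}" "Poly_Mapping.lookup lam g = 0"
  shows "eq_holds V E ends e f (lam + Poly_Mapping.single g 2)
    \<longleftrightarrow> eq_holds (contr_V V ends g) (E - {g}) (contr_ends ends g) e f lam"
  using assms by (simp add: eq_holds_def coeff_M1_contr lookup_Rpoly_contr Eef_def)

theorem lemma4p2:
  fixes V :: "'v set" and E :: "'e set" and ends :: "'e \<Rightarrow> 'v \<times> 'v"
    and e f g :: 'e and lam :: "'e \<Rightarrow>\<^sub>0 nat"
  assumes "wf_graph V E ends"
    and "e \<in> E" and "f \<in> E" and "e \<noteq> f"
    and "Poly_Mapping.keys lam \<subseteq> E - {e, f}" and "\<forall>h. Poly_Mapping.lookup lam h \<le> 2"
    and "g \<in> E - {e, f}"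
  shows "(Poly_Mapping.lookup lam g = 0 \<and> eq_holds V (del_edges E g) ends e f lam
            \<longrightarrow> eq_holds V E ends e f lam)
       \<and> (Poly_Mapping.lookup lam g = 2 \<and>
            eq_holds (contr_V V ends g) (del_edges E g) (contr_ends ends g) e f
              (Poly_Mapping.update g 0 lam)
            \<longrightarrow> eq_holds V E ends e f lam)"
proof -
  have fin: "finite E"
    using assms(1) by (simp add: wf_graph_def)
  have "eq_holds V E ends e f lam"
    if "Poly_Mapping.lookup lam g = 0" "eq_holds V (del_edges E g) ends e f lam"
    using that eq_holds_del[OF fin _ that(1), where e=e and f=f and V=V and ends=ends] assms(7)
    by (simp add: del_edges_def)
  moreover have "eq_holds V E ends e f lam"
    if "Poly_Mapping.lookup lam g = 2"
      and "eq_holds (contr_V V ends g) (del_edges E g) (contr_ends ends g) e f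
        (Poly_Mapping.update g 0 lam)"
  proof -
    have "lam = Poly_Mapping.update g 0 lam + Poly_Mapping.single g 2"
      using that(1)
      by (intro poly_mapping_eqI) (auto simp: lookup_add lookup_update lookup_single when_def)
    moreover have "Poly_Mapping.lookup (Poly_Mapping.update g 0 lam) g = 0"
      by (simp add: lookup_update)
    ultimately show ?thesis
      using eq_holds_contr[OF fin assms(7)] that(2) by (metis del_edges_def)
  qed
  ultimately show ?thesis
    by blast
qed

end
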